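(* Let $n\ge 1$, $\ell=2n^2-1$, and let $S_1,\dots,S_\ell$ be pairwise disjoint finite sets with $|S_i|\le n^2$ for every $i$. Then there is an injective map $\phi$ from $S_1\cup\dots\cup S_\ell$ to the set of $2$-element subsets of $\{1,\dots,2n^2\}$ such that for every $i$ and all distinct $s,s'\in S_i$, the sets $\phi(s)$ and $\phi(s')$ are disjoint. *)

theory Defs
  imports Main
begin

end

theory Submission
  imports Defs
begin

(* The construction is the classical round-robin 1-factorisation of the complete graph
   K_(q+1), q odd.  Take the vertices Z_q together with a point at infinity, represented
   by the integers 0..q with q playing the role of infinity.  For every centre h in Z_q
   the round with centre h is the perfect matching consisting of the edge {h, infinity}
   (offset 0) and the edges {h + k, h - k} for the offsets 1 <= k < (q+1)/2.  Edges of one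
   round are pairwise disjoint, and an edge determines its round because the sum of its
   endpoints is 2h and 2 is invertible modulo q.

   Independently,
   a disjoint family of finite sets is enumerated injectively by pairs (class, position).
   Labelling the class i with the round of centre i - 1 and the element at position k
   with the edge of offset k yields the general statement disjoint_pair_labelling,
   and the theorem is its instance q = 2n^2 - 1. *)

(* The edge with offset k in the round with centre h; vertices 0..q, q standing for infinity. *)
definition round_edge :: "int \<Rightarrow> int \<Rightarrow> int \<Rightarrow> int set" where
  "round_edge q h k = (if k = 0 then {h, q} else {(h + k) mod q, (h - k) mod q})"

lemma dvd_abs_less_imp_zero:
  fixes q x :: int
  assumes "q dvd x" "\<bar>x\<bar> < q"
  shows "x = 0"
proof (rule ccontr)
  assume "x \<noteq> 0"
  then have "\<bar>q\<bar> \<le> \<bar>x\<bar>" using assms(1) dvd_imp_le_int by blast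
  then show False using assms(2) by linarith
qed

lemma mod_shift_neq:
  fixes q a b h :: int
  assumes "0 < q" "\<bar>a - b\<bar> < q" "a \<noteq> b"
  shows "(h + a) mod q \<noteq> (h + b) mod q"
proof
  assume "(h + a) mod q = (h + b) mod q"
  then have "q dvd a - b" by (simp add: mod_eq_dvd_iff)
  then have "a - b = 0" using assms(2) by (rule dvd_abs_less_imp_zero)
  then show False using assms(3) by simp
qed

lemma round_edge_subset:
  assumes "0 \<le> h" "h < q"
  shows "round_edge q h k \<subseteq> {0..q}"
  using assms pos_mod_bound[of q] pos_mod_sign[of q] by (auto simp: round_edge_def less_imp_le)

lemma infinity_in_round_edge_iff:
  assumes "0 \<le> h" "h < q"
  shows "q \<in> round_edge q h k \<longleftrightarrow> k = 0"
proof -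
  have "0 < q" using assms by linarith
  then have "(h + k) mod q < q" "(h - k) mod q < q" by simp_all
  then show ?thesis by (auto simp: round_edge_def)
qed

lemma card_round_edge:
  assumes "0 \<le> h" "h < q" "0 \<le> k" "2 * k < q"
  shows "card (round_edge q h k) = 2"
proof (cases "k = 0")
  case True
  then show ?thesis using assms by (simp add: round_edge_def)
next
  case False
  have "(h + k) mod q \<noteq> (h + - k) mod q"
    using mod_shift_neq[of q k "-k" h] assms False by simp
  then show ?thesis using False by (simp add: round_edge_def)
qed

lemma round_edge_finite_point:
  assumes "x \<in> round_edge q h k" "x \<noteq> q" "0 \<le> h" "h < q" "0 \<le> k"
  obtains a where "\<bar>a\<bar> = k" "x = (h + a) mod q"
proof (cases "k = 0")
  case True
  then have "x = (h + 0) mod q" using assms by (simp add: round_edge_def)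
  then show ?thesis using that True by simp
next
  case False
  then have "x = (h + k) mod q \<or> x = (h + - k) mod q" using assms(1) by (simp add: round_edge_def)
  then show ?thesis using that assms(5) by (metis abs_minus_cancel abs_of_nonneg)
qed

lemma round_edges_disjoint:
  assumes "0 \<le> h" "h < q" "0 \<le> k" "2 * k < q" "0 \<le> k'" "2 * k' < q" "k \<noteq> k'"
  shows "round_edge q h k \<inter> round_edge q h k' = {}"
proof (rule ccontr)
  assume "round_edge q h k \<inter> round_edge q h k' \<noteq> {}"
  then obtain x where x: "x \<in> round_edge q h k" "x \<in> round_edge q h k'" by blast
  have "x \<noteq> q" using x assms infinity_in_round_edge_iff[of h q] by auto
  obtain a where a: "\<bar>a\<bar> = k" "x = (h + a) mod q"
    using round_edge_finite_point[OF x(1) \<open>x \<noteq> q\<close>] assms by blast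
  obtain b where b: "\<bar>b\<bar> = k'" "x = (h + b) mod q"
    using round_edge_finite_point[OF x(2) \<open>x \<noteq> q\<close>] assms by blast
  have "a \<noteq> b" "\<bar>a - b\<bar> < q" "0 < q" using a(1) b(1) assms by auto
  then have "(h + a) mod q \<noteq> (h + b) mod q" by (intro mod_shift_neq)
  then show False using a(2) b(2) by simp
qed

(* An edge determines the centre of its round: the endpoints sum to 2h modulo q, and 2
   is invertible modulo the odd number q. *)
lemma round_edge_center:
  assumes "odd q" "0 \<le> h" "h < q" "0 \<le> h'" "h' < q"
    and "round_edge q h k = round_edge q h' k'"
  shows "h = h'"
proof (cases "k = 0")
  case True
  then have "k' = 0" using assms infinity_in_round_edge_iff by metis
  then have "{h, q} = {h', q}" using assms True by (simp add: round_edge_def)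
  then show ?thesis using assms by (auto simp: doubleton_eq_iff)
next
  case False
  then have "k' \<noteq> 0" using assms infinity_in_round_edge_iff by metis
  then have "{(h + k) mod q, (h - k) mod q} = {(h' + k') mod q, (h' - k') mod q}"
    using assms False by (simp add: round_edge_def)
  then have "(h + k) mod q + (h - k) mod q = (h' + k') mod q + (h' - k') mod q"
    by (auto simp: doubleton_eq_iff)
  then have "((h + k) + (h - k)) mod q = ((h' + k') + (h' - k')) mod q"
    by (metis mod_add_eq)
  then have "q dvd 2 * (h - h')" by (simp add: mod_eq_dvd_iff right_diff_distrib)
  moreover have "coprime q 2" using \<open>odd q\<close> by simp
  ultimately have "q dvd h - h'" using coprime_dvd_mult_right_iff by blast
  moreover have "\<bar>h - h'\<bar> < q" using assms by linarith
  ultimately have "h - h' = 0" by (rule dvd_abs_less_imp_zero)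
  then show ?thesis by simp
qed

(* Within a round an edge determines its offset, since distinct edges are disjoint. *)
lemma round_edge_offset:
  assumes "0 \<le> h" "h < q" "0 \<le> k" "2 * k < q" "0 \<le> k'" "2 * k' < q"
    and "round_edge q h k = round_edge q h k'"
  shows "k = k'"
proof (rule ccontr)
  assume "k \<noteq> k'"
  then have "round_edge q h k = {}" using round_edges_disjoint assms by (metis Int_absorb)
  then show False using card_round_edge[of h q k] assms by simp
qed

definition shift_vertex :: "int \<Rightarrow> nat" where
  "shift_vertex x = nat x + 1"

lemma inj_on_shift_vertex: "inj_on shift_vertex {0..}"
  by (rule inj_onI) (simp add: shift_vertex_def)

definition factor_edge :: "nat \<Rightarrow> nat \<Rightarrow> nat \<Rightarrow> nat set" where
  "factor_edge q h k = shift_vertex ` round_edge (int q) (int h) (int k)"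

lemma round_edge_nonneg:
  assumes "h < q"
  shows "round_edge (int q) (int h) k \<subseteq> {0..}"
  using round_edge_subset[of "int h" "int q" k] assms by auto

lemma factor_edge_is_pair:
  assumes "h < q" "2 * k < q"
  shows "factor_edge q h k \<subseteq> {1..q+1}" "card (factor_edge q h k) = 2"
proof -
  have "round_edge (int q) (int h) (int k) \<subseteq> {0..int q}"
    using round_edge_subset assms by simp
  then show "factor_edge q h k \<subseteq> {1..q+1}"
    by (force simp: factor_edge_def shift_vertex_def)
  have "card (factor_edge q h k) = card (round_edge (int q) (int h) (int k))"
    unfolding factor_edge_def
    by (rule card_image[OF inj_on_subset[OF inj_on_shift_vertex round_edge_nonneg[OF assms(1)]]])
  then show "card (factor_edge q h k) = 2" using card_round_edge assms by simp
qed

lemma factor_edge_inj: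
  assumes "odd q" "h < q" "2 * k < q" "h' < q" "2 * k' < q"
    and "factor_edge q h k = factor_edge q h' k'"
  shows "h = h' \<and> k = k'"
proof -
  have "round_edge (int q) (int h) (int k) = round_edge (int q) (int h') (int k')"
    using assms(6) unfolding factor_edge_def
    using inj_on_image_eq_iff[OF inj_on_shift_vertex round_edge_nonneg round_edge_nonneg] assms by blast
  moreover from this have "h = h'"
    using round_edge_center[of "int q" "int h" "int h'"] assms by simp
  ultimately show ?thesis using round_edge_offset[of "int h" "int q" "int k" "int k'"] assms by simp
qed

lemma factor_edges_disjoint:
  assumes "h < q" "2 * k < q" "2 * k' < q" "k \<noteq> k'"
  shows "factor_edge q h k \<inter> factor_edge q h k' = {}"
proof -
  have "factor_edge q h k \<inter> factor_edge q h k'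
      = shift_vertex ` (round_edge (int q) (int h) (int k) \<inter> round_edge (int q) (int h) (int k'))"
    unfolding factor_edge_def
    using inj_on_image_Int[OF inj_on_shift_vertex round_edge_nonneg round_edge_nonneg] assms by blast
  then show ?thesis using round_edges_disjoint[of "int h" "int q" "int k" "int k'"] assms by simp
qed

lemma enumerate_disjoint_family:
  assumes "\<And>i. i \<in> I \<Longrightarrow> finite (S i)"
    and "\<And>i j. i \<in> I \<Longrightarrow> j \<in> I \<Longrightarrow> i \<noteq> j \<Longrightarrow> S i \<inter> S j = {}"
  obtains \<rho> :: "'a \<Rightarrow> 'i \<times> nat"
  where "inj_on \<rho> (\<Union>i\<in>I. S i)"
    and "\<And>i s. i \<in> I \<Longrightarrow> s \<in> S i \<Longrightarrow> fst (\<rho> s) = i \<and> snd (\<rho> s) < card (S i)"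
proof -
  have "\<forall>i\<in>I. \<exists>g. bij_betw g (S i) {0..<card (S i)}"
    using assms(1) ex_bij_betw_finite_nat by blast
  then obtain g where g: "\<forall>i\<in>I. bij_betw (g i) (S i) {0..<card (S i)}"
    by (rule bchoice[elim_format]) blast
  define cls where "cls s = (THE i. i \<in> I \<and> s \<in> S i)" for s
  have cls: "cls s = i" if "i \<in> I" "s \<in> S i" for i s
    unfolding cls_def
  proof (rule the_equality)
    show "i \<in> I \<and> s \<in> S i" using that ..
    show "j = i" if "j \<in> I \<and> s \<in> S j" for j
      using that \<open>i \<in> I\<close> \<open>s \<in> S i\<close> assms(2) by blast
  qed
  define \<rho> where "\<rho> s = (cls s, g (cls s) s)" for s
  have "inj_on \<rho> (\<Union>i\<in>I. S i)"
  proof (rule inj_onI)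
    fix s s' assume "s \<in> (\<Union>i\<in>I. S i)" "s' \<in> (\<Union>i\<in>I. S i)" "\<rho> s = \<rho> s'"
    then obtain i where i: "i \<in> I" "s \<in> S i" "s' \<in> S i" "g i s = g i s'"
      unfolding \<rho>_def using cls by auto
    have "inj_on (g i) (S i)" using g i(1) bij_betw_imp_inj_on by blast
    then show "s = s'" using i inj_onD by metis
  qed
  moreover have "fst (\<rho> s) = i \<and> snd (\<rho> s) < card (S i)" if "i \<in> I" "s \<in> S i" for i s
  proof -
    have "g i s \<in> {0..<card (S i)}" using g that bij_betwE by blast
    then show ?thesis using that cls unfolding \<rho>_def by simp
  qed
  ultimately show ?thesis using that by blast
qed

lemma disjoint_pair_labelling:
  fixes q :: nat and S :: "nat \<Rightarrow> 'a set"
  assumes "odd q"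
    and finite: "\<And>i. i \<in> {1..q} \<Longrightarrow> finite (S i)"
    and small: "\<And>i. i \<in> {1..q} \<Longrightarrow> 2 * card (S i) \<le> q + 1"
    and disjoint: "\<And>i j. i \<in> {1..q} \<Longrightarrow> j \<in> {1..q} \<Longrightarrow> i \<noteq> j \<Longrightarrow> S i \<inter> S j = {}"
  shows "\<exists>\<phi> :: 'a \<Rightarrow> nat set.
           inj_on \<phi> (\<Union>i\<in>{1..q}. S i)
         \<and> \<phi> ` (\<Union>i\<in>{1..q}. S i) \<subseteq> {P. P \<subseteq> {1..q+1} \<and> card P = 2}
         \<and> (\<forall>i\<in>{1..q}. \<forall>s\<in>S i. \<forall>s'\<in>S i. s \<noteq> s' \<longrightarrow> \<phi> s \<inter> \<phi> s' = {})"
proof -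
  obtain \<rho> :: "'a \<Rightarrow> nat \<times> nat" where \<rho>_inj: "inj_on \<rho> (\<Union>i\<in>{1..q}. S i)"
    and \<rho>: "\<And>i s. i \<in> {1..q} \<Longrightarrow> s \<in> S i \<Longrightarrow> fst (\<rho> s) = i \<and> snd (\<rho> s) < card (S i)"
    using enumerate_disjoint_family[of "{1..q}" S, OF finite disjoint] by blast
  have in_class: "\<rho> s = (i, snd (\<rho> s))" and position: "2 * snd (\<rho> s) < q"
    if "i \<in> {1..q}" "s \<in> S i" for i s
  proof -
    show "\<rho> s = (i, snd (\<rho> s))" using \<rho>[OF that] by (simp add: prod_eq_iff)
    show "2 * snd (\<rho> s) < q" using \<rho>[OF that] small[OF that(1)] by linarith
  qed
  define \<phi> where "\<phi> s = factor_edge q (fst (\<rho> s) - 1) (snd (\<rho> s))" for s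
  have \<phi>_class: "\<phi> s = factor_edge q (i - 1) (snd (\<rho> s))" if "i \<in> {1..q}" "s \<in> S i" for i s
    using in_class[OF that] unfolding \<phi>_def by (metis fst_conv)
  have "inj_on \<phi> (\<Union>i\<in>{1..q}. S i)"
  proof (rule inj_onI)
    fix s s' assume "s \<in> (\<Union>i\<in>{1..q}. S i)" "s' \<in> (\<Union>i\<in>{1..q}. S i)" "\<phi> s = \<phi> s'"
    then obtain i i' where i: "i \<in> {1..q}" "s \<in> S i" and i': "i' \<in> {1..q}" "s' \<in> S i'"
      and same_edge: "factor_edge q (i - 1) (snd (\<rho> s)) = factor_edge q (i' - 1) (snd (\<rho> s'))"
      using \<phi>_class by auto
    have "i - 1 < q" "i' - 1 < q" using i(1) i'(1) by auto
    then have "i - 1 = i' - 1 \<and> snd (\<rho> s) = snd (\<rho> s')"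
      using factor_edge_inj[OF \<open>odd q\<close> _ position[OF i] _ position[OF i'] same_edge] by blast
    then have "i = i'" "snd (\<rho> s) = snd (\<rho> s')" using i(1) i'(1) by auto
    then have "\<rho> s = \<rho> s'" using in_class[OF i] in_class[OF i'] by simp
    then show "s = s'" using inj_onD[OF \<rho>_inj] i i' by blast
  qed
  moreover have "\<phi> s \<subseteq> {1..q+1} \<and> card (\<phi> s) = 2" if "i \<in> {1..q}" "s \<in> S i" for i s
  proof -
    have "i - 1 < q" using that(1) by auto
    then show ?thesis using factor_edge_is_pair[OF _ position[OF that]] \<phi>_class[OF that] by simp
  qed
  moreover have "\<phi> s \<inter> \<phi> s' = {}"
    if i: "i \<in> {1..q}" and s: "s \<in> S i" and s': "s' \<in> S i" and "s \<noteq> s'" for i s s'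
  proof -
    have "snd (\<rho> s) \<noteq> snd (\<rho> s')"
    proof
      assume "snd (\<rho> s) = snd (\<rho> s')"
      then have "\<rho> s = \<rho> s'" using in_class[OF i s] in_class[OF i s'] by simp
      then show False using inj_onD[OF \<rho>_inj] i s s' \<open>s \<noteq> s'\<close> by blast
    qed
    moreover have "i - 1 < q" using i by auto
    ultimately show ?thesis
      using factor_edges_disjoint[OF _ position[OF i s] position[OF i s']] \<phi>_class[OF i s] \<phi>_class[OF i s']
      by simp
  qed
  ultimately show ?thesis by (intro exI[of _ \<phi>] conjI) blast+
qed

theorem mainTheorem12:
  fixes n :: nat and S :: "nat \<Rightarrow> 'a set"
  assumes "n \<ge> 1"
    and "\<And>i. i \<in> {1..2*n^2-1} \<Longrightarrow> finite (S i)"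
    and "\<And>i. i \<in> {1..2*n^2-1} \<Longrightarrow> card (S i) \<le> n^2"
    and "\<And>i j. i \<in> {1..2*n^2-1} \<Longrightarrow> j \<in> {1..2*n^2-1} \<Longrightarrow> i \<noteq> j \<Longrightarrow> S i \<inter> S j = {}"
  shows "\<exists>\<phi> :: 'a \<Rightarrow> nat set.
           inj_on \<phi> (\<Union>i\<in>{1..2*n^2-1}. S i)
         \<and> \<phi> ` (\<Union>i\<in>{1..2*n^2-1}. S i) \<subseteq> {P. P \<subseteq> {1..2*n^2} \<and> card P = 2}
         \<and> (\<forall>i\<in>{1..2*n^2-1}. \<forall>s\<in>S i. \<forall>s'\<in>S i. s \<noteq> s' \<longrightarrow> \<phi> s \<inter> \<phi> s' = {})"
proof -
  define q where "q = 2 * n^2 - 1"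
  have q_plus_one: "q + 1 = 2 * n^2" using \<open>n \<ge> 1\<close> unfolding q_def by simp
  then have "odd q" by (metis even_plus_one_iff dvd_triv_left)
  have small: "2 * card (S i) \<le> q + 1" if "i \<in> {1..q}" for i
    using assms(3) that q_plus_one unfolding q_def by fastforce
  have finite: "\<And>i. i \<in> {1..q} \<Longrightarrow> finite (S i)"
    using assms(2) unfolding q_def .
  have disjoint: "\<And>i j. i \<in> {1..q} \<Longrightarrow> j \<in> {1..q} \<Longrightarrow> i \<noteq> j \<Longrightarrow> S i \<inter> S j = {}"
    using assms(4) unfolding q_def .
  from disjoint_pair_labelling[OF \<open>odd q\<close> finite small disjoint] show ?thesis
    unfolding q_plus_one unfolding q_def .
qed

end
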